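(* Consider the graph orientation problem with arbitrary query costs, and let $1\le\alpha\le2$. Suppose \textsc{Threshold} with parameter $d\in(0,1]$ uses, in step 4, an algorithm that always returns a vertex cover of weight at most $\alpha$ times the minimum weight of a vertex cover of $G[V_{1/2}]$. Then for every instance, $\mathbb E[\textsc{Threshold}]\le\max\{\frac1d,\ \alpha+(2-\alpha)d\}\cdot\mathbb E[\mathrm{OPT}]$. In particular, with $d=2/(\alpha+\sqrt{8-\alpha(4-\alpha)})$, \textsc{Threshold} has competitive ratio at most $\frac12\big(\alpha+\sqrt{8-\alpha(4-\alpha)}\big)$.
   Context: An instance of the graph orientation problem consists of a graph $G=(V,E)$ and, for each vertex $v$, a query cost $c_v\ge0$ and a continuous distribution $d_v$ with minimal support interval $I_v=(\ell_v,r_v)$; it is assumed that $I_u\cap I_v\ne\emptyset$ for each edge $\{u,v\}$ and that neither interval of an edge is contained in the other. Weights $w_v\sim d_v$ are independent and querying $v$ reveals $w_v$ at cost $c_v$; $c(S)=\sum_{v\in S}c_v$. For a realization, $Q$ is a feasible query set if knowing $w_u$ for $u\in Q$ and only the intervals for unqueried vertices suffices to identify, for every edge, its endpoint of minimum weight; $\mathbb E[\mathrm{OPT}]$ is the expected minimum cost of a feasible query set. A vertex is mandatory for a realization if it belongs to every feasible query set; $p_v$ is the probability that $v$ is mandatory (for graphs, $p_v=1-\prod_{u:\{u,v\}\in E}\mathbb P[w_u\notin I_v]$). Algorithm \textsc{Threshold} with parameter $d\in[0,1]$: (1) let $M=\{v:p_v\ge d\}$; (2) compute an optimal basic feasible solution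 $x^*$ of the LP $\min\sum c_vx_v$ s.t. $x_u+x_v\ge1$ for every edge $\{u,v\}$ of $G[V\setminus M]$, $x\ge0$ (such solutions are half-integral); (3) let $V_1,V_{1/2},V_0$ be the vertices of $V\setminus M$ with $x^*_v=1,\frac12,0$ respectively; (4) compute a vertex cover $VC'$ of $G[V_{1/2}]$ with the given approximation algorithm; (5) query $Q=M\cup V_1\cup VC'$; (6) then query every vertex of $V\setminus Q$ that is mandatory (this is determined after step 5). $\mathbb E[\textsc{Threshold}]$ is its expected query cost. *)

theory Defs
  imports "HOL-Probability.Probability"
begin

text \<open>Vertices form a finite type 'v; the graph is given by its edge set E of
  2-element vertex sets. Vertex v has interval (l v, r v), query cost c v and
  weight distribution D v. A realization is a function w :: 'v => real; the
  joint law of independent weights is the product measure PiM UNIV D.\<close>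

definition go_instance ::
  "'v set set \<Rightarrow> ('v \<Rightarrow> real) \<Rightarrow> ('v \<Rightarrow> real) \<Rightarrow> ('v \<Rightarrow> real) \<Rightarrow> ('v \<Rightarrow> real measure) \<Rightarrow> bool" where
  "go_instance E l r c D \<longleftrightarrow>
     (\<forall>e\<in>E. card e = 2) \<and>
     (\<forall>v. 0 \<le> c v) \<and>
     (\<forall>v. l v < r v) \<and>
     (\<forall>v. prob_space (D v) \<and> sets (D v) = sets borel \<and>
          (\<forall>x. measure (D v) {x} = 0) \<and>
          measure (D v) {l v<..<r v} = 1 \<and>
          (\<forall>a. l v < a \<and> a < r v \<longrightarrow>
                0 < measure (D v) {l v<..a} \<and> 0 < measure (D v) {a..<r v})) \<and>
     (\<forall>u v. {u, v} \<in> E \<longrightarrow>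
          max (l u) (l v) < min (r u) (r v) \<and>
          \<not> {l u<..<r u} \<subseteq> {l v<..<r v} \<and> \<not> {l v<..<r v} \<subseteq> {l u<..<r u})"

definition consistent ::
  "('v \<Rightarrow> real) \<Rightarrow> ('v \<Rightarrow> real) \<Rightarrow> 'v set \<Rightarrow> ('v \<Rightarrow> real) \<Rightarrow> ('v \<Rightarrow> real) \<Rightarrow> bool" where
  "consistent l r Q w w' \<longleftrightarrow>
     (\<forall>v. (v \<in> Q \<longrightarrow> w' v = w v) \<and> (v \<notin> Q \<longrightarrow> l v < w' v \<and> w' v < r v))"

definition feasible_query ::
  "'v set set \<Rightarrow> ('v \<Rightarrow> real) \<Rightarrow> ('v \<Rightarrow> real) \<Rightarrow> ('v \<Rightarrow> real) \<Rightarrow> 'v set \<Rightarrow> bool" where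
  "feasible_query E l r w Q \<longleftrightarrow>
     (\<forall>e\<in>E. \<exists>x\<in>e. \<forall>w'. consistent l r Q w w' \<longrightarrow> (\<forall>y\<in>e. w' x \<le> w' y))"

definition mandatory ::
  "'v set set \<Rightarrow> ('v \<Rightarrow> real) \<Rightarrow> ('v \<Rightarrow> real) \<Rightarrow> ('v \<Rightarrow> real) \<Rightarrow> 'v \<Rightarrow> bool" where
  "mandatory E l r w v \<longleftrightarrow> (\<forall>Q. feasible_query E l r w Q \<longrightarrow> v \<in> Q)"

definition opt_cost ::
  "'v set set \<Rightarrow> ('v \<Rightarrow> real) \<Rightarrow> ('v \<Rightarrow> real) \<Rightarrow> ('v \<Rightarrow> real) \<Rightarrow> ('v \<Rightarrow> real) \<Rightarrow> real" where
  "opt_cost E l r c w = Min (sum c ` {Q. feasible_query E l r w Q})"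

definition prob_mandatory ::
  "'v set set \<Rightarrow> ('v \<Rightarrow> real) \<Rightarrow> ('v \<Rightarrow> real) \<Rightarrow> ('v \<Rightarrow> real measure) \<Rightarrow> 'v \<Rightarrow> real" where
  "prob_mandatory E l r D v = measure (PiM UNIV D) {w. mandatory E l r w v}"

text \<open>The LP  min sum c_v x_v  s.t. x_u + x_v >= 1 for edges of G[S], x >= 0,
  with variables indexed by S (x is 0 outside S).\<close>
definition lp_feasible :: "'v set set \<Rightarrow> 'v set \<Rightarrow> ('v \<Rightarrow> real) \<Rightarrow> bool" where
  "lp_feasible E S x \<longleftrightarrow>
     (\<forall>v\<in>S. 0 \<le> x v) \<and> (\<forall>u v. {u, v} \<in> E \<and> u \<in> S \<and> v \<in> S \<longrightarrow> 1 \<le> x u + x v)"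

text \<open>Basic feasible solution = vertex (extreme point) of the feasible polyhedron.\<close>
definition lp_basic_feasible :: "'v set set \<Rightarrow> 'v set \<Rightarrow> ('v \<Rightarrow> real) \<Rightarrow> bool" where
  "lp_basic_feasible E S x \<longleftrightarrow>
     lp_feasible E S x \<and> (\<forall>v. v \<notin> S \<longrightarrow> x v = 0) \<and>
     (\<forall>y. (\<forall>v. v \<notin> S \<longrightarrow> y v = 0) \<and> lp_feasible E S (\<lambda>v. x v + y v)
            \<and> lp_feasible E S (\<lambda>v. x v - y v) \<longrightarrow> y = (\<lambda>_. 0))"

definition lp_optimal_bfs ::
  "'v set set \<Rightarrow> ('v \<Rightarrow> real) \<Rightarrow> 'v set \<Rightarrow> ('v \<Rightarrow> real) \<Rightarrow> bool" where
  "lp_optimal_bfs E c S x \<longleftrightarrow>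
     lp_basic_feasible E S x \<and>
     (\<forall>x'. lp_feasible E S x' \<longrightarrow> (\<Sum>v\<in>S. c v * x v) \<le> (\<Sum>v\<in>S. c v * x' v))"

definition vertex_cover :: "'v set set \<Rightarrow> 'v set \<Rightarrow> 'v set \<Rightarrow> bool" where
  "vertex_cover E S C \<longleftrightarrow>
     C \<subseteq> S \<and> (\<forall>u v. {u, v} \<in> E \<and> u \<in> S \<and> v \<in> S \<longrightarrow> u \<in> C \<or> v \<in> C)"

definition threshold_steps ::
  "'v set set \<Rightarrow> ('v \<Rightarrow> real) \<Rightarrow> ('v \<Rightarrow> real) \<Rightarrow> ('v \<Rightarrow> real) \<Rightarrow> ('v \<Rightarrow> real measure)
   \<Rightarrow> real \<Rightarrow> real \<Rightarrow> ('v \<Rightarrow> real) \<Rightarrow> 'v set \<Rightarrow> 'v set \<Rightarrow> bool" where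
  "threshold_steps E l r c D \<alpha> d x VC Q \<longleftrightarrow>
     (let M = {v. d \<le> prob_mandatory E l r D v};
          S = - M;
          Vhalf = {v\<in>S. x v = 1/2};
          V1 = {v\<in>S. x v = 1}
      in lp_optimal_bfs E c S x \<and> vertex_cover E Vhalf VC \<and>
         (\<forall>C. vertex_cover E Vhalf C \<longrightarrow> sum c VC \<le> \<alpha> * sum c C) \<and>
         Q = M \<union> V1 \<union> VC)"

text \<open>Total cost of Threshold in realization w: step 5 queries Q, step 6 queries
  all mandatory vertices outside Q.\<close>
definition threshold_cost ::
  "'v set set \<Rightarrow> ('v \<Rightarrow> real) \<Rightarrow> ('v \<Rightarrow> real) \<Rightarrow> ('v \<Rightarrow> real) \<Rightarrow> 'v set \<Rightarrow> ('v \<Rightarrow> real) \<Rightarrow> real" where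
  "threshold_cost E l r c Q w = sum c Q + sum c {v. v \<notin> Q \<and> mandatory E l r w v}"

definition expected_threshold ::
  "'v set set \<Rightarrow> ('v \<Rightarrow> real) \<Rightarrow> ('v \<Rightarrow> real) \<Rightarrow> ('v \<Rightarrow> real) \<Rightarrow> ('v \<Rightarrow> real measure) \<Rightarrow> 'v set \<Rightarrow> real" where
  "expected_threshold E l r c D Q = (\<integral>w. threshold_cost E l r c Q w \<partial>(PiM UNIV D))"

definition expected_opt ::
  "'v set set \<Rightarrow> ('v \<Rightarrow> real) \<Rightarrow> ('v \<Rightarrow> real) \<Rightarrow> ('v \<Rightarrow> real) \<Rightarrow> ('v \<Rightarrow> real measure) \<Rightarrow> real" where
  "expected_opt E l r c D = (\<integral>w. opt_cost E l r c w \<partial>(PiM UNIV D))"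

end

theory Submission
  imports Defs
begin

(* Let z_v(w) be the fraction of optimal query sets of realization w that contain v, and z_v its
   expectation. Every feasible query set covers every edge and contains every mandatory vertex, so
   z is a fractional vertex cover with z_v >= p_v and E[OPT] = sum_v c_v z_v; moreover OPT meets
   V_1/2 in a vertex cover of G[V_1/2], so the alpha-approximate cover costs at most
   alpha * sum_{V_1/2} c_v z_v. Optimality of the half-integral LP solution x*, compared with two
   feasible perturbations towards z, gives c(V_1/2) <= 2 sum_{V_1/2} c_v z_v and
   c(V_1) + sum_{V_0} c_v p_v <= (1 + d) sum_{V_0 u V_1} c_v z_v. Charging M at rate 1/d
   (there p_v >= d), V_0 u V_1 at rate 1 + d and V_1/2 at rate (1 - d) alpha + 2 d bounds
   E[Threshold] by max(1/d, alpha + (2 - alpha) d) E[OPT]. *)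

section \<open>Feasible query sets\<close>

definition known_upper :: "'v set \<Rightarrow> ('v \<Rightarrow> real) \<Rightarrow> ('v \<Rightarrow> real) \<Rightarrow> 'v \<Rightarrow> real" where
  "known_upper Q r w v = (if v \<in> Q then w v else r v)"

definition known_lower :: "'v set \<Rightarrow> ('v \<Rightarrow> real) \<Rightarrow> ('v \<Rightarrow> real) \<Rightarrow> 'v \<Rightarrow> real" where
  "known_lower Q l w v = (if v \<in> Q then w v else l v)"

lemma consistent_le_iff:
  assumes lr: "\<And>v. l v < r v" and "x \<noteq> y"
  shows "(\<forall>w'. consistent l r Q w w' \<longrightarrow> w' x \<le> w' y) \<longleftrightarrow>
         known_upper Q r w x \<le> known_lower Q l w y"
proof
  assume le: "known_upper Q r w x \<le> known_lower Q l w y"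
  show "\<forall>w'. consistent l r Q w w' \<longrightarrow> w' x \<le> w' y"
  proof (intro allI impI)
    fix w' assume "consistent l r Q w w'"
    then have "w' x \<le> known_upper Q r w x" "known_lower Q l w y \<le> w' y"
      unfolding consistent_def known_upper_def known_lower_def by (auto simp: less_imp_le)
    with le show "w' x \<le> w' y" by linarith
  qed
next
  assume all: "\<forall>w'. consistent l r Q w w' \<longrightarrow> w' x \<le> w' y"
  show "known_upper Q r w x \<le> known_lower Q l w y"
  proof (rule ccontr)
    assume gt: "\<not> known_upper Q r w x \<le> known_lower Q l w y"
    \<comment> \<open>Pick w' x in (known_lower Q l w y, r x), then w' y in (l y, w' x).\<close>
    define X where "X = (if x \<in> Q then w x else (max (l x) (known_lower Q l w y) + r x) / 2)"
    define Y where "Y = (if y \<in> Q then w y else (l y + min X (r y)) / 2)"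
    define w' where "w' = (\<lambda>v. if v \<in> Q then w v else if v = x then X else if v = y then Y
                                else (l v + r v) / 2)"
    have "known_lower Q l w y < X" "x \<notin> Q \<Longrightarrow> l x < X \<and> X < r x"
      using gt lr[of x] unfolding X_def known_upper_def by (auto simp: max_def)
    moreover from this have "Y < X" "y \<notin> Q \<Longrightarrow> l y < Y \<and> Y < r y"
      using lr[of y] unfolding Y_def known_lower_def by (auto simp: min_def)
    ultimately have "consistent l r Q w w'" "w' y < w' x"
      using lr \<open>x \<noteq> y\<close> unfolding consistent_def w'_def X_def Y_def by auto
    with all show False by force
  qed
qed

lemma feasible_query_iff:
  assumes lr: "\<And>v. l v < r v"
  shows "feasible_query E l r w Q \<longleftrightarrow>
    (\<forall>e\<in>E. \<exists>x\<in>e. \<forall>y\<in>e. x = y \<or> known_upper Q r w x \<le> known_lower Q l w y)"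
proof -
  have "(\<forall>w'. consistent l r Q w w' \<longrightarrow> w' x \<le> w' y) \<longleftrightarrow>
        x = y \<or> known_upper Q r w x \<le> known_lower Q l w y" for x y
    by (cases "x = y") (simp_all add: consistent_le_iff[OF lr])
  then have "(\<forall>w'. consistent l r Q w w' \<longrightarrow> (\<forall>y\<in>e. w' x \<le> w' y)) \<longleftrightarrow>
      (\<forall>y\<in>e. x = y \<or> known_upper Q r w x \<le> known_lower Q l w y)" for x e
    by blast
  then show ?thesis unfolding feasible_query_def by simp
qed

lemma go_instance_interval: "go_instance E l r c D \<Longrightarrow> l v < r v"
  unfolding go_instance_def by auto

lemma go_instance_edge:
  assumes "go_instance E l r c D" "e \<in> E"
  obtains u v where "u \<noteq> v" "e = {u, v}"
  using assms unfolding go_instance_def card_2_iff by blast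

lemma feasible_query_covers_edge:
  assumes G: "go_instance E l r c D" and "feasible_query E l r w Q" and e: "{u, v} \<in> E"
  shows "u \<in> Q \<or> v \<in> Q"
proof (rule ccontr)
  assume "\<not> (u \<in> Q \<or> v \<in> Q)"
  moreover have "max (l u) (l v) < min (r u) (r v)" "u \<noteq> v"
    using G e unfolding go_instance_def by force+
  moreover obtain x where "x \<in> {u, v}" "\<forall>y\<in>{u, v}. x = y \<or> known_upper Q r w x \<le> known_lower Q l w y"
    using assms(2) e unfolding feasible_query_iff[OF go_instance_interval[OF G]] by blast
  ultimately show False unfolding known_upper_def known_lower_def by auto
qed

lemma feasible_query_UNIV:
  assumes G: "go_instance E l r c D"
  shows "feasible_query E l r w UNIV"
  unfolding feasible_query_iff[OF go_instance_interval[OF G]]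
proof
  fix e assume "e \<in> E"
  then obtain u v where "e = {u, v}" using go_instance_edge[OF G] by blast
  then show "\<exists>x\<in>e. \<forall>y\<in>e. x = y \<or> known_upper UNIV r w x \<le> known_lower UNIV l w y"
    unfolding known_upper_def known_lower_def by (cases "w u \<le> w v") auto
qed

section \<open>Averaging over a family of sets\<close>

definition avg_membership :: "'a set set \<Rightarrow> 'a \<Rightarrow> real" where
  "avg_membership F v = (\<Sum>Q\<in>F. indicator Q v) / card F"

lemma sum_avg_membership:
  fixes F :: "'a::finite set set"
  shows "(\<Sum>v\<in>A. a v * avg_membership F v) = (\<Sum>Q\<in>F. sum a (A \<inter> Q)) / card F"
proof -
  have "(\<Sum>v\<in>A. a v * (\<Sum>Q\<in>F. indicator Q v)) = (\<Sum>Q\<in>F. \<Sum>v\<in>A. a v * indicator Q v)"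
    unfolding sum_distrib_left by (rule sum.swap)
  also have "\<dots> = (\<Sum>Q\<in>F. sum a (A \<inter> Q))"
    by (rule sum.cong[OF refl]) (simp add: sum.inter_restrict indicator_def)
  finally show ?thesis
    unfolding avg_membership_def by (simp add: sum_divide_distrib[symmetric] mult.assoc)
qed

lemma avg_membership_sum_ge:
  fixes F :: "'a::finite set set"
  assumes "F \<noteq> {}" and "\<And>Q. Q \<in> F \<Longrightarrow> K \<le> sum a (A \<inter> Q)"
  shows "K \<le> (\<Sum>v\<in>A. a v * avg_membership F v)"
proof -
  have "K * card F \<le> (\<Sum>Q\<in>F. sum a (A \<inter> Q))"
    using sum_mono[of F "\<lambda>_. K", OF assms(2)] by (simp add: mult.commute)
  moreover have "0 < card F" using assms(1) by (simp add: card_gt_0_iff)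
  ultimately show ?thesis unfolding sum_avg_membership by (simp add: pos_le_divide_eq)
qed

lemma avg_membership_sum_le:
  fixes F :: "'a::finite set set"
  assumes "F \<noteq> {}" and "\<And>Q. Q \<in> F \<Longrightarrow> sum a (A \<inter> Q) \<le> K"
  shows "(\<Sum>v\<in>A. a v * avg_membership F v) \<le> K"
proof -
  have "(\<Sum>Q\<in>F. sum a (A \<inter> Q)) \<le> K * card F"
    using sum_mono[of F _ "\<lambda>_. K", OF assms(2)] by (simp add: mult.commute)
  moreover have "0 < card F" using assms(1) by (simp add: card_gt_0_iff)
  ultimately show ?thesis unfolding sum_avg_membership by (simp add: pos_divide_le_eq)
qed

lemma avg_membership_nonneg: "0 \<le> avg_membership F v"
  unfolding avg_membership_def by (simp add: sum_nonneg)

lemma avg_membership_le_1: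
  fixes F :: "'a::finite set set"
  assumes "F \<noteq> {}"
  shows "avg_membership F v \<le> 1"
  using avg_membership_sum_le[OF assms, of "\<lambda>_. 1" "{v}" 1] by (simp add: Int_insert_left)

lemma measurable_avg_membership [measurable]:
  fixes P :: "'b \<Rightarrow> 'a::finite set \<Rightarrow> bool"
  assumes [measurable]: "\<And>Q. Measurable.pred M (\<lambda>w. P w Q)"
  shows "(\<lambda>w. avg_membership {Q. P w Q} v) \<in> borel_measurable M"
proof -
  have "avg_membership {Q. P w Q} v =
      (\<Sum>Q\<in>UNIV. if P w Q then indicator Q v else 0) / (\<Sum>Q\<in>UNIV. if P w Q then 1 else 0)" for w
    unfolding avg_membership_def card_eq_sum
    by (simp add: sum.If_cases)
  then show ?thesis by simp
qed

section \<open>The half-integral vertex cover LP\<close>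

lemma finite_pos_lower_bound:
  fixes A :: "real set"
  assumes "finite A"
  obtains \<epsilon> where "0 < \<epsilon>" "\<And>a. a \<in> A \<Longrightarrow> 0 < a \<Longrightarrow> \<epsilon> \<le> a"
proof
  let ?B = "insert 1 {a \<in> A. 0 < a}"
  show "0 < Min ?B" using assms by (subst Min_gr_iff) auto
  show "Min ?B \<le> a" if "a \<in> A" "0 < a" for a using assms that by (intro Min_le) auto
qed

lemma lp_feasible_edge:
  "lp_feasible E S x \<Longrightarrow> {u, v} \<in> E \<Longrightarrow> u \<in> S \<Longrightarrow> v \<in> S \<Longrightarrow> 1 \<le> x u + x v"
  unfolding lp_feasible_def by blast

lemma lp_feasible_nonneg: "lp_feasible E S x \<Longrightarrow> v \<in> S \<Longrightarrow> 0 \<le> x v"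
  unfolding lp_feasible_def by blast

definition half_sign :: "real \<Rightarrow> real" where
  "half_sign t = (if t \<in> {0, 1/2, 1} then 0 else if 1/2 < t \<and> t < 1 then -1 else 1)"

lemma half_sign_tight: "0 \<le> a \<Longrightarrow> 0 \<le> b \<Longrightarrow> a + b = 1 \<Longrightarrow> half_sign a + half_sign b = 0"
  unfolding half_sign_def by auto

lemma lp_basic_feasible_half_integral:
  fixes x :: "'v::finite \<Rightarrow> real"
  assumes bfs: "lp_basic_feasible E S x" and "v \<in> S"
  shows "x v \<in> {0, 1/2, 1}"
proof -
  have feas: "lp_feasible E S x" using bfs unfolding lp_basic_feasible_def by blast
  obtain \<epsilon> where "0 < \<epsilon>" and \<epsilon>_le:
    "\<And>a. a \<in> range x \<union> range (\<lambda>(u, v). (x u + x v - 1) / 2) \<Longrightarrow> 0 < a \<Longrightarrow> \<epsilon> \<le> a"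
    using finite_pos_lower_bound[of "range x \<union> range (\<lambda>(u, v). (x u + x v - 1) / 2)"] by auto
  \<comment> \<open>Moving every fractional coordinate off {0, 1/2, 1} by \<open>\<plusminus>\<epsilon>\<close>, in opposite directions at the
    two ends of a tight edge, keeps both perturbations feasible.\<close>
  define y where "y v = (if v \<in> S then \<epsilon> * half_sign (x v) else 0)" for v
  have y_le: "\<bar>y v\<bar> \<le> x v" if "v \<in> S" for v
    using \<epsilon>_le[of "x v"] \<open>0 < \<epsilon>\<close> lp_feasible_nonneg[OF feas that] that
    unfolding y_def half_sign_def by (auto simp: abs_mult)
  have y_edge: "\<bar>y u + y v\<bar> \<le> x u + x v - 1" if "{u, v} \<in> E" "u \<in> S" "v \<in> S" for u v
  proof (cases "x u + x v = 1")
    case True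
    then show ?thesis using half_sign_tight[of "x u" "x v"] lp_feasible_nonneg[OF feas] that
      unfolding y_def by (simp add: distrib_left[symmetric])
  next
    case False
    then have "2 * \<epsilon> \<le> x u + x v - 1"
      using \<epsilon>_le[of "(x u + x v - 1) / 2"] lp_feasible_edge[OF feas that] by force
    moreover have y_small: "\<bar>y w\<bar> \<le> \<epsilon>" for w
      using \<open>0 < \<epsilon>\<close> unfolding y_def half_sign_def by (auto simp: abs_mult)
    ultimately show ?thesis using abs_triangle_ineq[of "y u" "y v"] y_small[of u] y_small[of v] by linarith
  qed
  have "lp_feasible E S (\<lambda>v. x v + y v)" "lp_feasible E S (\<lambda>v. x v - y v)"
    unfolding lp_feasible_def using y_le y_edge by (fastforce simp: abs_le_iff)+
  moreover have "\<forall>v. v \<notin> S \<longrightarrow> y v = 0" unfolding y_def by simp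
  ultimately have "y = (\<lambda>_. 0)" using bfs unfolding lp_basic_feasible_def by blast
  then have "half_sign (x v) = 0" using \<open>v \<in> S\<close> \<open>0 < \<epsilon>\<close> unfolding y_def by (metis mult_eq_0_iff less_irrefl)
  then show ?thesis unfolding half_sign_def by (auto split: if_splits)
qed

lemma lp_optimal_bfs_le_modified:
  assumes opt: "lp_optimal_bfs E c S x" and "A \<subseteq> S" and "finite S"
    and feas: "lp_feasible E S (\<lambda>v. if v \<in> A then y v else x v)"
  shows "(\<Sum>v\<in>A. c v * x v) \<le> (\<Sum>v\<in>A. c v * y v)"
proof -
  have split: "(\<Sum>v\<in>S. c v * f v) = (\<Sum>v\<in>A. c v * f v) + (\<Sum>v\<in>S - A. c v * f v)" for f
    using \<open>A \<subseteq> S\<close> \<open>finite S\<close> by (metis (no_types) sum.subset_diff add.commute)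
  have "(\<Sum>v\<in>S. c v * x v) \<le> (\<Sum>v\<in>S. c v * (if v \<in> A then y v else x v))"
    using opt feas unfolding lp_optimal_bfs_def by blast
  then show ?thesis unfolding split[of x] split[of "\<lambda>v. if v \<in> A then y v else x v"] by simp
qed

context
  fixes E :: "'v::finite set set" and c x :: "'v \<Rightarrow> real" and S :: "'v set"
  assumes opt: "lp_optimal_bfs E c S x"
begin

lemma lp_optimal_bfs_values: "v \<in> S \<Longrightarrow> x v = 0 \<or> x v = 1/2 \<or> x v = 1"
  using lp_basic_feasible_half_integral opt unfolding lp_optimal_bfs_def by fastforce

lemma lp_optimal_bfs_feasible: "lp_feasible E S x"
  using opt unfolding lp_optimal_bfs_def lp_basic_feasible_def by blast

lemma lp_optimal_bfs_half_cost_le: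
  assumes z: "lp_feasible E UNIV z"
  shows "sum c {v\<in>S. x v = 1/2} \<le> 2 * (\<Sum>v\<in>{v\<in>S. x v = 1/2}. c v * z v)"
proof -
  let ?H = "{v\<in>S. x v = 1/2}"
  \<comment> \<open>A neighbour of a half vertex outside the half vertices has value 1.\<close>
  have "lp_feasible E S (\<lambda>v. if v \<in> ?H then z v else x v)"
    unfolding lp_feasible_def
  proof safe
    fix v assume "v \<in> S" then show "0 \<le> (if v \<in> ?H then z v else x v)"
      using lp_feasible_nonneg[OF z] lp_feasible_nonneg[OF lp_optimal_bfs_feasible] by simp
  next
    fix u v assume e: "{u, v} \<in> E" "u \<in> S" "v \<in> S"
    have "{v, u} \<in> E" using e(1) by (simp add: insert_commute)
    then show "1 \<le> (if u \<in> ?H then z u else x u) + (if v \<in> ?H then z v else x v)"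
      using e lp_feasible_edge[OF z, of u v] lp_feasible_edge[OF lp_optimal_bfs_feasible e]
        lp_feasible_nonneg[OF z] lp_optimal_bfs_values[of u] lp_optimal_bfs_values[of v]
      by auto
  qed
  then have "(\<Sum>v\<in>?H. c v * x v) \<le> (\<Sum>v\<in>?H. c v * z v)"
    by (intro lp_optimal_bfs_le_modified[OF opt]) auto
  moreover have "(\<Sum>v\<in>?H. c v * x v) = sum c ?H / 2"
    unfolding sum_divide_distrib by (rule sum.cong) auto
  ultimately show ?thesis by simp
qed

lemma lp_optimal_bfs_midpoint_feasible:
  assumes z: "lp_feasible E UNIV z" and p_le_z: "\<And>v. p v \<le> z v"
    and p_lt_d: "\<And>v. v \<in> S \<Longrightarrow> p v < d" and "0 < d"
  defines "w \<equiv> \<lambda>v. (1 + d) * z v - (if x v = 1 then 0 else p v)"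
  shows "lp_feasible E S (\<lambda>v. if v \<in> {v\<in>S. x v \<noteq> 1/2} then (x v + w v) / 2 else x v)"
    (is "lp_feasible E S ?y")
proof -
  \<comment> \<open>Only the midpoint is feasible: w alone may violate an edge between a 1-vertex and a
    half vertex.\<close>
  have w_nonneg: "0 \<le> w v" for v
  proof -
    have "0 \<le> z v" "0 \<le> d * z v" using lp_feasible_nonneg[OF z, of v] \<open>0 < d\<close> by simp_all
    then show ?thesis using p_le_z[of v] unfolding w_def by (auto simp: distrib_right)
  qed
  have y_half: "1/2 \<le> ?y v" if "v \<in> S" "x v \<noteq> 0" for v
    using lp_optimal_bfs_values[OF that(1)] that(2) w_nonneg[of v] by auto
  have y_zero: "?y v = ((1 + d) * z v - p v) / 2" if "v \<in> S" "x v = 0" for v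
    using that unfolding w_def by simp
  have y_one: "?y v = (1 + (1 + d) * z v) / 2" if "v \<in> S" "x v = 1" for v
    using that unfolding w_def by simp
  show ?thesis
    unfolding lp_feasible_def
  proof safe
    fix v assume "v \<in> S" then show "0 \<le> ?y v"
      using lp_feasible_nonneg[OF lp_optimal_bfs_feasible] w_nonneg by simp
  next
    fix u v assume e: "{u, v} \<in> E" "u \<in> S" "v \<in> S"
    have "1 \<le> z u + z v" using lp_feasible_edge[OF z e(1)] by simp
    then have zuv: "1 + d \<le> (1 + d) * z u + (1 + d) * z v"
      using mult_left_mono[of 1 "z u + z v" "1 + d"] \<open>0 < d\<close> by (simp add: distrib_left)
    consider "x u = 0" "x v = 1" | "x v = 0" "x u = 1" | "x u \<noteq> 0" "x v \<noteq> 0"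
      using lp_feasible_edge[OF lp_optimal_bfs_feasible e] lp_optimal_bfs_values[OF e(2)]
        lp_optimal_bfs_values[OF e(3)] by force
    then show "1 \<le> ?y u + ?y v"
    proof cases
      case 1
      then show ?thesis using y_zero[OF e(2)] y_one[OF e(3)] p_lt_d[OF e(2)] zuv by simp
    next
      case 2
      then show ?thesis using y_zero[OF e(3)] y_one[OF e(2)] p_lt_d[OF e(3)] zuv by simp
    next
      case 3
      then show ?thesis using y_half[OF e(2)] y_half[OF e(3)] by simp
    qed
  qed
qed

lemma lp_optimal_bfs_integral_cost_le:
  assumes z: "lp_feasible E UNIV z" and p_le_z: "\<And>v. p v \<le> z v"
    and p_lt_d: "\<And>v. v \<in> S \<Longrightarrow> p v < d" and "0 < d"
  shows "(\<Sum>v\<in>{v\<in>S. x v \<noteq> 1/2}. c v * (if x v = 1 then 1 else p v))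
           \<le> (1 + d) * (\<Sum>v\<in>{v\<in>S. x v \<noteq> 1/2}. c v * z v)"
proof -
  let ?A = "{v\<in>S. x v \<noteq> 1/2}"
  define q where "q v = (if x v = 1 then 0 else p v)" for v
  define w where "w v = (1 + d) * z v - q v" for v
  have "(\<Sum>v\<in>?A. c v * x v) \<le> (\<Sum>v\<in>?A. c v * ((x v + w v) / 2))"
    using lp_optimal_bfs_midpoint_feasible[OF assms]
    unfolding w_def q_def by (intro lp_optimal_bfs_le_modified[OF opt]) auto
  then have "(\<Sum>v\<in>?A. c v * x v) \<le> (\<Sum>v\<in>?A. c v * w v)"
    by (simp add: sum.distrib distrib_left add_divide_distrib sum_divide_distrib[symmetric])
  moreover have "c v * (if x v = 1 then 1 else p v) = c v * x v + c v * q v" if "v \<in> ?A" for v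
    using lp_optimal_bfs_values[of v] that unfolding q_def by auto
  ultimately show ?thesis
    by (simp add: w_def sum.distrib sum_subtractf sum_distrib_left algebra_simps)
qed

end

lemma sum_le_weighted_div:
  fixes c z :: "'a \<Rightarrow> real"
  assumes "0 < d" "\<And>v. v \<in> M \<Longrightarrow> d \<le> z v" "\<And>v. 0 \<le> c v"
  shows "sum c M \<le> (\<Sum>v\<in>M. c v * z v) / d"
  unfolding sum_divide_distrib
proof (rule sum_mono)
  fix v assume "v \<in> M"
  then show "c v \<le> c v * z v / d"
    using assms mult_left_mono[of d "z v" "c v"] by (simp add: le_divide_eq)
qed

lemma sum_cover_le_interpolated:
  fixes c p :: "'a \<Rightarrow> real"
  assumes "VC \<subseteq> H" "finite H" "\<And>v. v \<in> H \<Longrightarrow> p v \<le> d" "\<And>v. 0 \<le> c v" "0 \<le> d" "d \<le> 1"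
    and "sum c VC \<le> \<alpha> * Z" "sum c H \<le> 2 * Z"
  shows "sum c VC + (\<Sum>v\<in>H - VC. c v * p v) \<le> (\<alpha> + (2 - \<alpha>) * d) * Z"
proof -
  have "(\<Sum>v\<in>H - VC. c v * p v) \<le> (\<Sum>v\<in>H - VC. d * c v)"
    using assms(3,4) by (intro sum_mono) (simp add: mult.commute[of d] mult_left_mono)
  also have "\<dots> = d * (sum c H - sum c VC)"
    using assms(1,2) by (simp add: sum_distrib_left[symmetric] sum_diff)
  finally have "sum c VC + (\<Sum>v\<in>H - VC. c v * p v) \<le> (1 - d) * sum c VC + d * sum c H"
    by (simp add: algebra_simps)
  also have "\<dots> \<le> (1 - d) * (\<alpha> * Z) + d * (2 * Z)"
    using assms(5-8) by (intro add_mono mult_left_mono) auto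
  finally show ?thesis by (simp add: algebra_simps)
qed

lemma sum_split_threshold_parts:
  fixes f x :: "'v::finite \<Rightarrow> real"
  shows "sum f UNIV = sum f M + sum f {v\<in>-M. x v \<noteq> 1/2} + sum f {v\<in>-M. x v = 1/2}"
proof -
  let ?A = "{v\<in>-M. x v \<noteq> 1/2}" and ?H = "{v\<in>-M. x v = 1/2}"
  have "UNIV = M \<union> ?A \<union> ?H" by auto
  moreover have "sum f (M \<union> ?A \<union> ?H) = sum f (M \<union> ?A) + sum f ?H"
    by (rule sum.union_disjoint) auto
  moreover have "sum f (M \<union> ?A) = sum f M + sum f ?A"
    by (rule sum.union_disjoint) auto
  ultimately show ?thesis by simp
qed

lemma threshold_cost_split:
  fixes c p x :: "'v::finite \<Rightarrow> real"
  assumes H_def: "H = {v\<in>-M. x v = 1/2}" and Q_def: "Q = M \<union> {v\<in>-M. x v = 1} \<union> VC"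
    and "VC \<subseteq> H"
  shows "sum c Q + (\<Sum>v\<in>-Q. c v * p v) = sum c M
    + (\<Sum>v\<in>{v\<in>-M. x v \<noteq> 1/2}. c v * (if x v = 1 then 1 else p v))
    + (sum c VC + (\<Sum>v\<in>H - VC. c v * p v))"
proof -
  define cost where "cost v = c v * (if v \<in> Q then 1 else p v)" for v
  have "sum c Q + (\<Sum>v\<in>-Q. c v * p v) = sum cost UNIV"
  proof -
    have "(\<Sum>v\<in>-Q. cost v) = (\<Sum>v\<in>-Q. c v * p v)" unfolding cost_def by (rule sum.cong) auto
    moreover have "sum cost Q = sum c Q" unfolding cost_def by simp
    ultimately show ?thesis using sum.Int_Diff[of UNIV cost Q] by (simp add: Compl_eq_Diff_UNIV)
  qed
  moreover have "sum cost M = sum c M" unfolding cost_def Q_def by (rule sum.cong) auto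
  moreover have "sum cost {v\<in>-M. x v \<noteq> 1/2} = (\<Sum>v\<in>{v\<in>-M. x v \<noteq> 1/2}. c v * (if x v = 1 then 1 else p v))"
    unfolding cost_def Q_def using \<open>VC \<subseteq> H\<close> unfolding H_def by (intro sum.cong) auto
  moreover have "sum cost H = sum c VC + (\<Sum>v\<in>H - VC. c v * p v)"
  proof -
    have "sum cost VC = sum c VC" unfolding cost_def Q_def by (rule sum.cong) auto
    moreover have "sum cost (H - VC) = (\<Sum>v\<in>H - VC. c v * p v)"
      unfolding cost_def Q_def H_def by (intro sum.cong) auto
    ultimately show ?thesis using sum.subset_diff[OF \<open>VC \<subseteq> H\<close> finite, of cost] by linarith
  qed
  ultimately show ?thesis using sum_split_threshold_parts[of cost M x] unfolding H_def by simp
qed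

lemma threshold_cost_le_fractional:
  fixes c p z x :: "'v::finite \<Rightarrow> real"
  assumes "0 < d" "d \<le> 1" "1 \<le> \<alpha>" and c_nonneg: "\<And>v. 0 \<le> c v"
    and z: "lp_feasible E UNIV z" and p_le_z: "\<And>v. p v \<le> z v"
    and M_def: "M = {v. d \<le> p v}" and H_def: "H = {v\<in>-M. x v = 1/2}"
    and Q_def: "Q = M \<union> {v\<in>-M. x v = 1} \<union> VC"
    and opt: "lp_optimal_bfs E c (-M) x" and "VC \<subseteq> H"
    and VC_le: "sum c VC \<le> \<alpha> * (\<Sum>v\<in>H. c v * z v)"
  shows "sum c Q + (\<Sum>v\<in>-Q. c v * p v) \<le> max (1 / d) (\<alpha> + (2 - \<alpha>) * d) * (\<Sum>v\<in>UNIV. c v * z v)"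
proof -
  define A where "A = {v\<in>-M. x v \<noteq> 1/2}"
  define R where "R = max (1 / d) (\<alpha> + (2 - \<alpha>) * d)"
  have cz_nonneg: "0 \<le> (\<Sum>v\<in>B. c v * z v)" for B
    using c_nonneg lp_feasible_nonneg[OF z] by (simp add: sum_nonneg)
  have "d \<le> z v" if "v \<in> M" for v using that p_le_z[of v] unfolding M_def by simp
  then have "sum c M \<le> (\<Sum>v\<in>M. c v * z v) / d"
    by (rule sum_le_weighted_div[OF \<open>0 < d\<close> _ c_nonneg])
  also have "\<dots> \<le> R * (\<Sum>v\<in>M. c v * z v)"
    using mult_right_mono[of "1 / d" R, OF _ cz_nonneg] unfolding R_def by simp
  finally have part_M: "sum c M \<le> R * (\<Sum>v\<in>M. c v * z v)" .
  have "(\<Sum>v\<in>A. c v * (if x v = 1 then 1 else p v)) \<le> (1 + d) * (\<Sum>v\<in>A. c v * z v)"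
    unfolding A_def using \<open>0 < d\<close> p_le_z
    by (intro lp_optimal_bfs_integral_cost_le[OF opt z]) (auto simp: M_def)
  also have "\<dots> \<le> R * (\<Sum>v\<in>A. c v * z v)"
  proof (rule mult_right_mono)
    have "0 \<le> (\<alpha> - 1) * (1 - d)" using assms(2,3) by simp
    then show "1 + d \<le> R" unfolding R_def by (simp add: algebra_simps)
  qed (rule cz_nonneg)
  finally have part_A: "(\<Sum>v\<in>A. c v * (if x v = 1 then 1 else p v)) \<le> R * (\<Sum>v\<in>A. c v * z v)" .
  have "sum c VC + (\<Sum>v\<in>H - VC. c v * p v) \<le> (\<alpha> + (2 - \<alpha>) * d) * (\<Sum>v\<in>H. c v * z v)"
    using \<open>VC \<subseteq> H\<close> c_nonneg \<open>0 < d\<close> \<open>d \<le> 1\<close> VC_le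
      lp_optimal_bfs_half_cost_le[OF opt z, folded H_def]
    by (intro sum_cover_le_interpolated) (auto simp: H_def M_def)
  also have "\<dots> \<le> R * (\<Sum>v\<in>H. c v * z v)"
    unfolding R_def by (intro mult_right_mono cz_nonneg) simp
  finally have part_H: "sum c VC + (\<Sum>v\<in>H - VC. c v * p v) \<le> R * (\<Sum>v\<in>H. c v * z v)" .
  show ?thesis
    unfolding threshold_cost_split[OF H_def Q_def \<open>VC \<subseteq> H\<close>] R_def[symmetric]
      sum_split_threshold_parts[of _ M x] H_def[symmetric] A_def[symmetric]
    using part_M part_A part_H by (simp add: distrib_left)
qed

section \<open>The expected optimal query set as a fractional cover\<close>

definition optimal_query ::
  "'v set set \<Rightarrow> ('v \<Rightarrow> real) \<Rightarrow> ('v \<Rightarrow> real) \<Rightarrow> ('v \<Rightarrow> real) \<Rightarrow> ('v \<Rightarrow> real) \<Rightarrow> 'v set \<Rightarrow> bool" where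
  "optimal_query E l r c w Q \<longleftrightarrow>
     feasible_query E l r w Q \<and> (\<forall>Q'. feasible_query E l r w Q' \<longrightarrow> sum c Q \<le> sum c Q')"

text \<open>Averaging over all optimal query sets, rather than choosing one, keeps the resulting
  fractional cover measurable in the realization.\<close>

definition opt_frequency ::
  "'v set set \<Rightarrow> ('v \<Rightarrow> real) \<Rightarrow> ('v \<Rightarrow> real) \<Rightarrow> ('v \<Rightarrow> real) \<Rightarrow> ('v \<Rightarrow> real) \<Rightarrow> 'v \<Rightarrow> real" where
  "opt_frequency E l r c w = avg_membership {Q. optimal_query E l r c w Q}"

definition expected_opt_frequency ::
  "'v set set \<Rightarrow> ('v \<Rightarrow> real) \<Rightarrow> ('v \<Rightarrow> real) \<Rightarrow> ('v \<Rightarrow> real) \<Rightarrow> ('v \<Rightarrow> real measure) \<Rightarrow> 'v \<Rightarrow> real" where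
  "expected_opt_frequency E l r c D v = (\<integral>w. opt_frequency E l r c w v \<partial>PiM UNIV D)"

lemma optimal_query_feasible: "optimal_query E l r c w Q \<Longrightarrow> feasible_query E l r w Q"
  unfolding optimal_query_def by blast

context
  fixes E :: "'v::finite set set" and l r c :: "'v \<Rightarrow> real" and D :: "'v \<Rightarrow> real measure"
  assumes G: "go_instance E l r c D"
begin

lemma optimal_query_exists: "{Q. optimal_query E l r c w Q} \<noteq> {}"
proof -
  let ?F = "{Q. feasible_query E l r w Q}"
  have "Min (sum c ` ?F) \<in> sum c ` ?F"
    using feasible_query_UNIV[OF G] by (intro Min_in) auto
  then obtain Q where "Q \<in> ?F" "sum c Q = Min (sum c ` ?F)" by auto
  then have "optimal_query E l r c w Q" unfolding optimal_query_def by simp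
  then show ?thesis by blast
qed

lemma opt_cost_optimal_query: "optimal_query E l r c w Q \<Longrightarrow> opt_cost E l r c w = sum c Q"
  unfolding opt_cost_def optimal_query_def by (intro Min_eqI) auto

lemma opt_cost_eq_sum_opt_frequency:
  "opt_cost E l r c w = (\<Sum>v\<in>UNIV. c v * opt_frequency E l r c w v)"
  unfolding opt_frequency_def
  by (intro antisym avg_membership_sum_ge avg_membership_sum_le optimal_query_exists)
    (simp_all add: opt_cost_optimal_query)

lemma opt_frequency_bounds: "0 \<le> opt_frequency E l r c w v" "opt_frequency E l r c w v \<le> 1"
  unfolding opt_frequency_def
  by (simp_all add: avg_membership_nonneg avg_membership_le_1[OF optimal_query_exists])

lemma sets_PiM_borel: "sets (PiM UNIV D) = sets (PiM UNIV (\<lambda>_. borel))"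
  using G unfolding go_instance_def by (intro sets_PiM_cong) auto

lemma space_PiM_UNIV: "space (PiM UNIV D) = UNIV"
  using sets_eq_imp_space_eq[OF sets_PiM_borel] by (simp add: space_PiM)

lemma measurable_component_PiM [measurable]: "(\<lambda>w. w v) \<in> borel_measurable (PiM UNIV D)"
proof -
  have "sets (D v) = sets borel" using G unfolding go_instance_def by blast
  then show ?thesis
    using measurable_component_singleton[of v UNIV D] measurable_cong_sets[OF refl] by blast
qed

lemma measurable_known_le [measurable]:
  "Measurable.pred (PiM UNIV D) (\<lambda>w. known_upper Q r w x \<le> known_lower Q l w y)"
proof -
  have "(\<lambda>w. known_upper Q r w x) \<in> borel_measurable (PiM UNIV D)"
    "(\<lambda>w. known_lower Q l w y) \<in> borel_measurable (PiM UNIV D)"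
    unfolding known_upper_def known_lower_def by simp_all
  then show ?thesis unfolding pred_def by (rule borel_measurable_le)
qed

lemma measurable_feasible_query [measurable]:
  "Measurable.pred (PiM UNIV D) (\<lambda>w. feasible_query E l r w Q)"
  unfolding feasible_query_iff[OF go_instance_interval[OF G]] by measurable

lemma measurable_optimal_query [measurable]:
  "Measurable.pred (PiM UNIV D) (\<lambda>w. optimal_query E l r c w Q)"
  unfolding optimal_query_def by measurable

lemma measurable_mandatory [measurable]:
  "Measurable.pred (PiM UNIV D) (\<lambda>w. mandatory E l r w v)"
  unfolding mandatory_def by measurable

lemma measurable_opt_frequency [measurable]:
  "(\<lambda>w. opt_frequency E l r c w v) \<in> borel_measurable (PiM UNIV D)"
  unfolding opt_frequency_def by measurable

lemma prob_space_realizations: "prob_space (PiM UNIV D)"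
  using G unfolding go_instance_def by (intro prob_space_PiM) auto

lemma integrable_opt_frequency: "integrable (PiM UNIV D) (\<lambda>w. opt_frequency E l r c w v)"
proof -
  interpret prob_space "PiM UNIV D" by (rule prob_space_realizations)
  show ?thesis by (rule integrable_const_bound[where B=1]) (simp_all add: opt_frequency_bounds)
qed

lemma integral_sum_opt_frequency:
  "(\<integral>w. (\<Sum>v\<in>A. a v * opt_frequency E l r c w v) \<partial>PiM UNIV D)
     = (\<Sum>v\<in>A. a v * expected_opt_frequency E l r c D v)"
  unfolding expected_opt_frequency_def using integrable_opt_frequency by simp

lemma sum_expected_opt_frequency_ge:
  assumes "\<And>w. K \<le> (\<Sum>v\<in>A. a v * opt_frequency E l r c w v)"
  shows "K \<le> (\<Sum>v\<in>A. a v * expected_opt_frequency E l r c D v)"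
proof -
  interpret prob_space "PiM UNIV D" by (rule prob_space_realizations)
  have "(\<integral>w. K \<partial>PiM UNIV D) \<le> (\<integral>w. (\<Sum>v\<in>A. a v * opt_frequency E l r c w v) \<partial>PiM UNIV D)"
    using assms integrable_opt_frequency by (intro integral_mono) auto
  then show ?thesis by (simp add: integral_sum_opt_frequency prob_space)
qed

lemma expected_opt_eq_sum: "expected_opt E l r c D = (\<Sum>v\<in>UNIV. c v * expected_opt_frequency E l r c D v)"
  unfolding expected_opt_def opt_cost_eq_sum_opt_frequency by (rule integral_sum_opt_frequency)

lemma lp_feasible_expected_opt_frequency: "lp_feasible E UNIV (expected_opt_frequency E l r c D)"
  unfolding lp_feasible_def
proof safe
  fix v show "0 \<le> expected_opt_frequency E l r c D v"
    unfolding expected_opt_frequency_def by (simp add: opt_frequency_bounds)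
next
  fix u v assume e: "{u, v} \<in> E"
  then have "u \<noteq> v" using G unfolding go_instance_def by force
  have "1 \<le> (\<Sum>x\<in>{u, v}. 1 * opt_frequency E l r c w x)" for w
    unfolding opt_frequency_def
    using feasible_query_covers_edge[OF G optimal_query_feasible e] \<open>u \<noteq> v\<close>
    by (intro avg_membership_sum_ge optimal_query_exists) (auto simp: Int_insert_left)
  from sum_expected_opt_frequency_ge[OF this]
  show "1 \<le> expected_opt_frequency E l r c D u + expected_opt_frequency E l r c D v"
    using \<open>u \<noteq> v\<close> by simp
qed

lemma sets_mandatory: "{w. mandatory E l r w v} \<in> sets (PiM UNIV D)"
  using measurable_mandatory[unfolded pred_def] by (simp add: space_PiM_UNIV)

lemma integrable_indicator_mandatory:
  "integrable (PiM UNIV D) (indicator {w. mandatory E l r w v} :: _ \<Rightarrow> real)"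
proof -
  interpret prob_space "PiM UNIV D" by (rule prob_space_realizations)
  show ?thesis
    using sets_mandatory by (intro integrable_real_indicator) (simp_all add: emeasure_finite less_top[symmetric])
qed

lemma prob_mandatory_le_expected_opt_frequency:
  "prob_mandatory E l r D v \<le> expected_opt_frequency E l r c D v"
proof -
  interpret prob_space "PiM UNIV D" by (rule prob_space_realizations)
  have "indicator {w. mandatory E l r w v} w \<le> opt_frequency E l r c w v" for w
  proof (cases "mandatory E l r w v")
    case True
    then have "1 \<le> (\<Sum>u\<in>{v}. 1 * opt_frequency E l r c w u)"
      unfolding opt_frequency_def mandatory_def
      by (intro avg_membership_sum_ge optimal_query_exists) (auto dest: optimal_query_feasible)
    with True show ?thesis by simp
  qed (simp add: opt_frequency_bounds)
  then have "(\<integral>w. indicator {w. mandatory E l r w v} w \<partial>PiM UNIV D) \<le> expected_opt_frequency E l r c D v"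
    unfolding expected_opt_frequency_def
    by (intro integral_mono integrable_indicator_mandatory integrable_opt_frequency)
  then show ?thesis unfolding prob_mandatory_def using sets_mandatory by simp
qed

lemma approx_vertex_cover_le_expected_opt_frequency:
  assumes "0 < \<alpha>" and approx: "\<forall>C. vertex_cover E H C \<longrightarrow> sum c VC \<le> \<alpha> * sum c C"
  shows "sum c VC \<le> \<alpha> * (\<Sum>v\<in>H. c v * expected_opt_frequency E l r c D v)"
proof -
  have "sum c VC / \<alpha> \<le> (\<Sum>v\<in>H. c v * opt_frequency E l r c w v)" for w
    unfolding opt_frequency_def
  proof (intro avg_membership_sum_ge optimal_query_exists)
    fix Q assume "Q \<in> {Q. optimal_query E l r c w Q}"
    then have "vertex_cover E H (H \<inter> Q)"
      using feasible_query_covers_edge[OF G optimal_query_feasible] unfolding vertex_cover_def by blast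
    then show "sum c VC / \<alpha> \<le> sum c (H \<inter> Q)"
      using approx \<open>0 < \<alpha>\<close> by (simp add: divide_le_eq mult.commute)
  qed
  from sum_expected_opt_frequency_ge[OF this] show ?thesis
    using \<open>0 < \<alpha>\<close> by (simp add: divide_le_eq mult.commute)
qed

lemma expected_threshold_eq:
  "expected_threshold E l r c D Q = sum c Q + (\<Sum>v\<in>-Q. c v * prob_mandatory E l r D v)"
proof -
  interpret prob_space "PiM UNIV D" by (rule prob_space_realizations)
  have cost_eq: "threshold_cost E l r c Q = (\<lambda>w. sum c Q + (\<Sum>v\<in>-Q. c v * indicator {w. mandatory E l r w v} w))"
    unfolding threshold_cost_def
    by (simp add: sum.inter_filter[symmetric] indicator_def Collect_conj_eq Collect_neg_eq)
  have integrable_term: "integrable (PiM UNIV D) (\<lambda>w. c v * indicator {w. mandatory E l r w v} w)" for v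
    by (intro Bochner_Integration.integrable_mult_right integrable_indicator_mandatory)
  have "expected_threshold E l r c D Q = (\<integral>w. sum c Q \<partial>PiM UNIV D)
      + (\<integral>w. (\<Sum>v\<in>-Q. c v * indicator {w. mandatory E l r w v} w) \<partial>PiM UNIV D)"
    unfolding expected_threshold_def cost_eq
    by (intro Bochner_Integration.integral_add integrable_const Bochner_Integration.integrable_sum integrable_term)
  also have "\<dots> = sum c Q + (\<Sum>v\<in>-Q. \<integral>w. c v * indicator {w. mandatory E l r w v} w \<partial>PiM UNIV D)"
    by (simp only: Bochner_Integration.integral_sum integrable_term lebesgue_integral_const prob_space scaleR_one)
  also have "\<dots> = sum c Q + (\<Sum>v\<in>-Q. c v * prob_mandatory E l r D v)"
    unfolding prob_mandatory_def using sets_mandatory by simp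
  finally show ?thesis .
qed

end

section \<open>Competitive ratio of Threshold\<close>

lemma expected_threshold_le:
  fixes E :: "'v::finite set set"
  assumes G: "go_instance E l r c D" and "0 < d" "d \<le> 1" "1 \<le> \<alpha>"
    and steps: "threshold_steps E l r c D \<alpha> d x VC Q"
  shows "expected_threshold E l r c D Q \<le> max (1 / d) (\<alpha> + (2 - \<alpha>) * d) * expected_opt E l r c D"
proof -
  define M where "M = {v. d \<le> prob_mandatory E l r D v}"
  define H where "H = {v\<in>-M. x v = 1/2}"
  have opt: "lp_optimal_bfs E c (-M) x" and "vertex_cover E H VC"
    and approx: "\<forall>C. vertex_cover E H C \<longrightarrow> sum c VC \<le> \<alpha> * sum c C"
    and Q_eq: "Q = M \<union> {v\<in>-M. x v = 1} \<union> VC"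
    using steps unfolding threshold_steps_def Let_def M_def H_def by auto
  show ?thesis
    unfolding expected_threshold_eq[OF G] expected_opt_eq_sum[OF G]
  proof (rule threshold_cost_le_fractional[OF assms(2-4) _ lp_feasible_expected_opt_frequency[OF G]
        prob_mandatory_le_expected_opt_frequency[OF G] M_def H_def Q_eq opt])
    show "\<And>v. 0 \<le> c v" using G unfolding go_instance_def by blast
    show "VC \<subseteq> H" using \<open>vertex_cover E H VC\<close> unfolding vertex_cover_def by blast
    show "sum c VC \<le> \<alpha> * (\<Sum>v\<in>H. c v * expected_opt_frequency E l r c D v)"
      using approx_vertex_cover_le_expected_opt_frequency[OF G _ approx] \<open>1 \<le> \<alpha>\<close> by simp
  qed
qed

lemma optimal_threshold_parameter:
  fixes \<alpha> :: real
  assumes "0 \<le> \<alpha>"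
  defines "s \<equiv> sqrt (8 - \<alpha> * (4 - \<alpha>))"
  shows "0 < 2 / (\<alpha> + s)" "2 / (\<alpha> + s) \<le> 1"
    and "max (1 / (2 / (\<alpha> + s))) (\<alpha> + (2 - \<alpha>) * (2 / (\<alpha> + s))) = (\<alpha> + s) / 2"
proof -
  have radicand: "8 - \<alpha> * (4 - \<alpha>) = 4 + (\<alpha> - 2)\<^sup>2" by (simp add: algebra_simps power2_eq_square)
  then have "2 \<le> s" unfolding s_def by (metis real_sqrt_four real_sqrt_le_mono le_add_same_cancel1 zero_le_power2)
  then show "0 < 2 / (\<alpha> + s)" "2 / (\<alpha> + s) \<le> 1" using \<open>0 \<le> \<alpha>\<close> by simp_all
  have "s\<^sup>2 = 4 + (\<alpha> - 2)\<^sup>2" unfolding s_def radicand by simp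
  \<comment> \<open>This choice of d makes both terms of the maximum equal.\<close>
  then have "\<alpha> + (2 - \<alpha>) * (2 / (\<alpha> + s)) = (\<alpha> + s) / 2"
    using \<open>2 \<le> s\<close> \<open>0 \<le> \<alpha>\<close> by (simp add: field_simps power2_eq_square)
  then show "max (1 / (2 / (\<alpha> + s))) (\<alpha> + (2 - \<alpha>) * (2 / (\<alpha> + s))) = (\<alpha> + s) / 2" by simp
qed

theorem theorem3p1:
  fixes E :: "('v::finite) set set" and l r c :: "'v \<Rightarrow> real"
    and D :: "'v \<Rightarrow> real measure" and \<alpha> :: real
  assumes "go_instance E l r c D" and "1 \<le> \<alpha>" and "\<alpha> \<le> 2"
  shows "(\<forall>d x VC Q. 0 < d \<and> d \<le> 1 \<and> threshold_steps E l r c D \<alpha> d x VC Q \<longrightarrow>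
            expected_threshold E l r c D Q
              \<le> max (1 / d) (\<alpha> + (2 - \<alpha>) * d) * expected_opt E l r c D)
       \<and> (\<forall>x VC Q.
            threshold_steps E l r c D \<alpha> (2 / (\<alpha> + sqrt (8 - \<alpha> * (4 - \<alpha>)))) x VC Q \<longrightarrow>
            expected_threshold E l r c D Q
              \<le> (\<alpha> + sqrt (8 - \<alpha> * (4 - \<alpha>))) / 2 * expected_opt E l r c D)"
proof (intro conjI allI impI)
  fix d x VC Q
  assume "0 < d \<and> d \<le> 1 \<and> threshold_steps E l r c D \<alpha> d x VC Q"
  then show "expected_threshold E l r c D Q \<le> max (1 / d) (\<alpha> + (2 - \<alpha>) * d) * expected_opt E l r c D"
    using expected_threshold_le[OF assms(1) _ _ assms(2)] by blast
next
  fix x VC Q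
  assume steps: "threshold_steps E l r c D \<alpha> (2 / (\<alpha> + sqrt (8 - \<alpha> * (4 - \<alpha>)))) x VC Q"
  have "0 \<le> \<alpha>" using assms(2) by simp
  note d = optimal_threshold_parameter[OF this]
  show "expected_threshold E l r c D Q \<le> (\<alpha> + sqrt (8 - \<alpha> * (4 - \<alpha>))) / 2 * expected_opt E l r c D"
    using expected_threshold_le[OF assms(1) d(1,2) assms(2) steps] unfolding d(3) .
qed

end
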